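(* Let $\Theta=\{\theta_1,\dots,\theta_N\}$ be a finite set of $N\ge 1$ distinct elements, and let $PES(\Theta)=\{A_{ij} : i=0,\dots,N;\ j=1,\dots,P(N,i)\}$ be its permutation event space, where $P(N,i)=\frac{N!}{(N-i)!}$. For $i\ge 0$ let $F(i)=\sum_{k=0}^{i}P(i,k)=\sum_{k=0}^{i}\frac{i!}{(i-k)!}$. For a permutation mass function $\mathscr{M}$ on $PES(\Theta)$ define $$H_{RPS}(\mathscr{M})=-\sum_{i=1}^{N}\sum_{j=1}^{P(N,i)}\mathscr{M}(A_{ij})\log\left(\frac{\mathscr{M}(A_{ij})}{F(i)-1}\right).$$ Then the maximum of $H_{RPS}(\mathscr{M})$ over all permutation mass functions $\mathscr{M}$ on $PES(\Theta)$ equals $$H_{\max\text{-}RPS}=\log\left(\sum_{i=1}^{N}P(N,i)\,(F(i)-1)\right).$$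
   Context: The permutation event space $PES(\Theta)$ is the set of all ordered tuples of distinct elements of $\Theta$ (including the empty tuple $\emptyset=A_{01}$): for each $i\in\{0,\dots,N\}$, the tuples of length $i$ are enumerated as $A_{i1},\dots,A_{i,P(N,i)}$. A permutation mass function (PMF) is a map $\mathscr{M}:PES(\Theta)\to[0,1]$ with $\mathscr{M}(\emptyset)=0$ and $\sum_{A\in PES(\Theta)}\mathscr{M}(A)=1$. The logarithm has a fixed base $b>1$, and the convention $0\log 0=0$ is used. *)

theory Defs
  imports Complex_Main
begin

definition perm_count :: "nat \<Rightarrow> nat \<Rightarrow> nat" where
  "perm_count N i = fact N div fact (N - i)"

definition F_rps :: "nat \<Rightarrow> nat" where
  "F_rps i = (\<Sum>k = 0..i. perm_count i k)"

definition PES :: "'a set \<Rightarrow> 'a list set" where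
  "PES \<Theta> = {xs. distinct xs \<and> set xs \<subseteq> \<Theta>}"

definition is_PMF :: "'a set \<Rightarrow> ('a list \<Rightarrow> real) \<Rightarrow> bool" where
  "is_PMF \<Theta> M \<longleftrightarrow> M [] = 0 \<and> (\<forall>A\<in>PES \<Theta>. 0 \<le> M A \<and> M A \<le> 1)
     \<and> (\<Sum>A\<in>PES \<Theta>. M A) = 1"

text \<open>Entropy of random permutation sets, log base b. Note log b 0 = 0 in Isabelle,
  so 0 log 0 = 0 holds.\<close>
definition H_RPS :: "real \<Rightarrow> 'a set \<Rightarrow> ('a list \<Rightarrow> real) \<Rightarrow> real" where
  "H_RPS b \<Theta> M = - (\<Sum>A\<in>PES \<Theta> - {[]}.
      M A * log b (M A / (real (F_rps (length A)) - 1)))"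

end

theory Submission
  imports Defs
begin

text \<open>Write \<open>w(A) = F(|A|) - 1 \<ge> 1\<close> for the weight of a non-empty event \<open>A\<close> and \<open>Z\<close> for the
  sum of all weights, which counting events by length shows to be the claimed sum
  \<open>\<Sum>\<^sub>i P(N,i) (F(i) - 1)\<close>. Then \<open>H\<^sub>R\<^sub>P\<^sub>S(M) = -\<Sum>\<^sub>A M(A) log (M(A)/w(A))\<close> is a weighted
  entropy, and Gibbs' inequality (i.e. \<open>ln x \<le> x - 1\<close> applied to \<open>x = w(A)/(Z M(A))\<close>)
  gives \<open>H\<^sub>R\<^sub>P\<^sub>S(M) \<le> log Z\<close>, with equality for \<open>M(A) = w(A)/Z\<close>.\<close>

lemma length_le_card_of_PES:
  assumes "finite T" "A \<in> PES T"
  shows "length A \<le> card T"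
proof -
  have "distinct A" "set A \<subseteq> T" using assms(2) by (auto simp: PES_def)
  then show ?thesis
    using distinct_card card_mono[OF assms(1)] by metis
qed

lemma finite_PES:
  assumes "finite T"
  shows "finite (PES T)"
proof (rule finite_subset)
  show "PES T \<subseteq> {xs. set xs \<subseteq> T \<and> length xs \<le> card T}"
    using length_le_card_of_PES[OF assms] by (auto simp: PES_def)
qed (rule finite_lists_length_le[OF assms])

lemma card_PES_length:
  assumes "finite T" "i \<le> card T"
  shows "card {A \<in> PES T. length A = i} = perm_count (card T) i"
proof -
  have "{A \<in> PES T. length A = i} = {xs. length xs = i \<and> distinct xs \<and> set xs \<subseteq> T}"
    unfolding PES_def by auto
  moreover have "perm_count (card T) i = \<Prod>{card T - i + 1 .. card T}"
    unfolding perm_count_def using assms(2) by (simp add: fact_div_fact)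
  ultimately show ?thesis
    using card_lists_distinct_length_eq[OF assms] by simp
qed

lemma sum_PES_nonempty_by_length:
  fixes g :: "nat \<Rightarrow> 'b::comm_semiring_1"
  assumes "finite T"
  shows "(\<Sum>A \<in> PES T - {[]}. g (length A)) = (\<Sum>i = 1..card T. of_nat (perm_count (card T) i) * g i)"
proof -
  have levels: "PES T - {[]} = (\<Union>i \<in> {1..card T}. {A \<in> PES T. length A = i})"
    using length_le_card_of_PES[OF assms] by (auto simp: Suc_le_eq)
  have "(\<Sum>A \<in> PES T - {[]}. g (length A))
      = (\<Sum>i = 1..card T. \<Sum>A \<in> {A \<in> PES T. length A = i}. g (length A))"
    unfolding levels by (rule sum.UNION_disjoint) (use finite_PES[OF assms] in auto)
  also have "\<dots> = (\<Sum>i = 1..card T. of_nat (perm_count (card T) i) * g i)"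
    using card_PES_length[OF assms] by (intro sum.cong) auto
  finally show ?thesis .
qed

lemma perm_count_0 [simp]: "perm_count n 0 = 1"
  by (simp add: perm_count_def)

lemma perm_count_1:
  assumes "n \<ge> 1"
  shows "perm_count n 1 = n"
  using assms by (cases n) (simp_all add: perm_count_def)

lemma two_le_F_rps:
  assumes "i \<ge> 1"
  shows "F_rps i \<ge> 2"
proof -
  have "(\<Sum>k \<in> {0, 1}. perm_count i k) \<le> F_rps i"
    unfolding F_rps_def using assms by (intro sum_mono2) auto
  then show ?thesis
    using assms perm_count_1[OF assms] by simp
qed

lemma sum_PES_nonempty_of_PMF:
  assumes "finite T" "is_PMF T M"
  shows "(\<Sum>A \<in> PES T - {[]}. M A) = 1"
proof -
  have "[] \<in> PES T" by (simp add: PES_def)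
  then have "(\<Sum>A \<in> PES T. M A) = M [] + (\<Sum>A \<in> PES T - {[]}. M A)"
    by (rule sum.remove[OF finite_PES[OF assms(1)]])
  then show ?thesis using assms(2) by (simp add: is_PMF_def)
qed

lemma is_PMF_normalize:
  fixes w :: "'a list \<Rightarrow> real"
  assumes "finite T" and nonneg: "\<And>A. A \<in> PES T - {[]} \<Longrightarrow> w A \<ge> 0"
    and pos: "(\<Sum>A \<in> PES T - {[]}. w A) > 0"
  shows "is_PMF T (\<lambda>A. if A \<in> PES T - {[]} then w A / (\<Sum>A \<in> PES T - {[]}. w A) else 0)"
    (is "is_PMF T ?M")
proof -
  let ?S = "PES T - {[]}"
  have "finite ?S" using finite_PES[OF assms(1)] by simp
  have bounds: "0 \<le> ?M A \<and> ?M A \<le> 1" for A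
  proof (cases "A \<in> ?S")
    case True
    then have "w A \<le> sum w ?S"
      using \<open>finite ?S\<close> nonneg by (intro member_le_sum) auto
    then show ?thesis using True nonneg pos by simp
  qed auto
  have "(\<Sum>A \<in> PES T. ?M A) = (\<Sum>A \<in> ?S. w A / sum w ?S)"
    by (rule sum.mono_neutral_cong_right) (use finite_PES[OF assms(1)] in auto)
  also have "\<dots> = 1"
    using pos by (simp flip: sum_divide_distrib)
  finally show ?thesis
    unfolding is_PMF_def using bounds by (metis DiffE singletonI)
qed

lemma minus_mult_log_divide_le:
  fixes p w Z b :: real
  assumes "p \<ge> 0" "w > 0" "Z > 0" "b > 1"
  shows "- (p * log b (p / w)) - p * log b Z \<le> (w / Z - p) / ln b"
proof (cases "p = 0")
  case True
  then show ?thesis using assms by simp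
next
  case False
  with assms have "p > 0" "ln b > 0" by auto
  have "- (p * log b (p / w)) - p * log b Z = p * (ln (w / (p * Z)) / ln b)"
    using \<open>p > 0\<close> assms by (simp add: log_def ln_div ln_mult field_simps)
  also have "\<dots> \<le> p * ((w / (p * Z) - 1) / ln b)"
    using \<open>p > 0\<close> \<open>ln b > 0\<close> assms
    by (intro mult_left_mono divide_right_mono ln_le_minus_one) auto
  also have "\<dots> = (w / Z - p) / ln b"
    using \<open>p > 0\<close> \<open>ln b > 0\<close> by (simp add: field_simps)
  finally show ?thesis .
qed

lemma weighted_entropy_le_log_sum:
  fixes p w :: "'a \<Rightarrow> real" and b :: real
  assumes "finite S" "b > 1"
    and "\<And>x. x \<in> S \<Longrightarrow> w x > 0" "\<And>x. x \<in> S \<Longrightarrow> p x \<ge> 0" "(\<Sum>x \<in> S. p x) = 1"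
  shows "- (\<Sum>x \<in> S. p x * log b (p x / w x)) \<le> log b (\<Sum>x \<in> S. w x)"
proof -
  let ?Z = "\<Sum>x \<in> S. w x"
  have "S \<noteq> {}" using assms(5) by auto
  then have "?Z > 0" using assms by (intro sum_pos) auto
  have "- (\<Sum>x \<in> S. p x * log b (p x / w x)) - log b ?Z
      = (\<Sum>x \<in> S. - (p x * log b (p x / w x)) - p x * log b ?Z)"
    using assms(5) by (simp add: sum_subtractf sum_negf flip: sum_distrib_right)
  also have "\<dots> \<le> (\<Sum>x \<in> S. (w x / ?Z - p x) / ln b)"
    using assms \<open>?Z > 0\<close> by (intro sum_mono minus_mult_log_divide_le) auto
  also have "\<dots> = (?Z / ?Z - (\<Sum>x \<in> S. p x)) / ln b"
    by (simp add: sum_subtractf flip: sum_divide_distrib)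
  also have "\<dots> = 0" using assms(5) \<open>?Z > 0\<close> by simp
  finally show ?thesis by simp
qed

lemma weighted_entropy_normalize:
  fixes w :: "'a \<Rightarrow> real" and b :: real
  assumes "finite S" "S \<noteq> {}" "\<And>x. x \<in> S \<Longrightarrow> w x > 0"
  defines "Z \<equiv> \<Sum>x \<in> S. w x"
  shows "- (\<Sum>x \<in> S. w x / Z * log b (w x / Z / w x)) = log b Z"
proof -
  have "Z > 0" unfolding Z_def using assms by (intro sum_pos) auto
  have "(\<Sum>x \<in> S. w x / Z * log b (w x / Z / w x)) = (\<Sum>x \<in> S. w x / Z) * log b (1 / Z)"
    unfolding sum_distrib_right using assms(3) by (intro sum.cong) auto
  also have "\<dots> = - log b Z"
    using \<open>Z > 0\<close> by (simp add: Z_def log_divide flip: sum_divide_distrib)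
  finally show ?thesis by simp
qed

theorem theorem4:
  fixes \<Theta> :: "'a set" and N :: nat and b :: real
  assumes "finite \<Theta>" and "card \<Theta> = N" and "N \<ge> 1" and "b > 1"
  shows "(\<exists>M. is_PMF \<Theta> M \<and>
            H_RPS b \<Theta> M = log b (\<Sum>i = 1..N. real (perm_count N i) * (real (F_rps i) - 1)))
       \<and> (\<forall>M. is_PMF \<Theta> M \<longrightarrow>
            H_RPS b \<Theta> M \<le> log b (\<Sum>i = 1..N. real (perm_count N i) * (real (F_rps i) - 1)))"
proof -
  define S where "S = PES \<Theta> - {[]}"
  define w where "w A = real (F_rps (length A)) - 1" for A :: "'a list"
  have H: "H_RPS b \<Theta> M = - (\<Sum>A \<in> S. M A * log b (M A / w A))" for M
    by (simp add: H_RPS_def S_def w_def)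
  have Z: "(\<Sum>A \<in> S. w A) = (\<Sum>i = 1..N. real (perm_count N i) * (real (F_rps i) - 1))"
    unfolding S_def w_def using sum_PES_nonempty_by_length[OF assms(1)] assms(2) by simp
  have "finite S" using finite_PES[OF assms(1)] by (simp add: S_def)
  have w_pos: "w A > 0" if "A \<in> S" for A
    using that two_le_F_rps[of "length A"] by (cases A) (auto simp: S_def w_def)
  obtain x where "x \<in> \<Theta>" using assms(2,3) by fastforce
  then have "[x] \<in> S" by (simp add: S_def PES_def)
  then have "S \<noteq> {}" by auto
  have "(\<Sum>A \<in> S. w A) > 0" using \<open>finite S\<close> \<open>S \<noteq> {}\<close> w_pos by (intro sum_pos) auto
  define M where "M A = (if A \<in> S then w A / (\<Sum>A \<in> S. w A) else 0)" for A
  have "is_PMF \<Theta> M"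
    unfolding M_def S_def using is_PMF_normalize[OF assms(1)] \<open>(\<Sum>A \<in> S. w A) > 0\<close> w_pos
    by (simp add: S_def less_imp_le)
  moreover have "H_RPS b \<Theta> M = log b (\<Sum>A \<in> S. w A)"
    unfolding H using weighted_entropy_normalize[OF \<open>finite S\<close> \<open>S \<noteq> {}\<close> w_pos]
    by (simp add: M_def)
  moreover have "H_RPS b \<Theta> M' \<le> log b (\<Sum>A \<in> S. w A)" if "is_PMF \<Theta> M'" for M'
    unfolding H using that sum_PES_nonempty_of_PMF[OF assms(1) that] w_pos assms(4)
    by (intro weighted_entropy_le_log_sum \<open>finite S\<close>) (auto simp: S_def is_PMF_def)
  ultimately show ?thesis unfolding Z by blast
qed

end
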